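(* For every claw-free graph $G$, $\chi(G^2)\le 2\omega(G)^2-2\omega(G)+1$.
   Context: Claw-free means no induced $K_{1,3}$. $G^2$ is the graph on $V(G)$ where distinct vertices are adjacent iff at distance at most $2$ in $G$. $\chi$ is chromatic number, $\omega$ clique number. *)

theory Defs
  imports Main
begin

definition simple_graph :: "'a set \<Rightarrow> ('a \<Rightarrow> 'a \<Rightarrow> bool) \<Rightarrow> bool" where
  "simple_graph V E \<longleftrightarrow> finite V \<and> (\<forall>x y. E x y \<longrightarrow> E y x) \<and> (\<forall>x. \<not> E x x)
     \<and> (\<forall>x y. E x y \<longrightarrow> x \<in> V \<and> y \<in> V)"

definition claw_free :: "'a set \<Rightarrow> ('a \<Rightarrow> 'a \<Rightarrow> bool) \<Rightarrow> bool" where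
  "claw_free V E \<longleftrightarrow> \<not> (\<exists>c\<in>V. \<exists>a\<in>V. \<exists>b\<in>V. \<exists>d\<in>V.
      E c a \<and> E c b \<and> E c d \<and> a \<noteq> b \<and> a \<noteq> d \<and> b \<noteq> d
      \<and> \<not> E a b \<and> \<not> E a d \<and> \<not> E b d)"

definition graph_square :: "'a set \<Rightarrow> ('a \<Rightarrow> 'a \<Rightarrow> bool) \<Rightarrow> 'a \<Rightarrow> 'a \<Rightarrow> bool" where
  "graph_square V E x y \<longleftrightarrow> x \<in> V \<and> y \<in> V \<and> x \<noteq> y \<and> (E x y \<or> (\<exists>z\<in>V. E x z \<and> E z y))"

definition proper_colouring :: "'a set \<Rightarrow> ('a \<Rightarrow> 'a \<Rightarrow> bool) \<Rightarrow> nat \<Rightarrow> ('a \<Rightarrow> nat) \<Rightarrow> bool" where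
  "proper_colouring V E k f \<longleftrightarrow> (\<forall>x\<in>V. f x < k) \<and> (\<forall>x\<in>V. \<forall>y\<in>V. E x y \<longrightarrow> f x \<noteq> f y)"

definition chromatic_number :: "'a set \<Rightarrow> ('a \<Rightarrow> 'a \<Rightarrow> bool) \<Rightarrow> nat" where
  "chromatic_number V E = (LEAST k. \<exists>f. proper_colouring V E k f)"

definition is_clique :: "'a set \<Rightarrow> ('a \<Rightarrow> 'a \<Rightarrow> bool) \<Rightarrow> 'a set \<Rightarrow> bool" where
  "is_clique V E K \<longleftrightarrow> K \<subseteq> V \<and> (\<forall>x\<in>K. \<forall>y\<in>K. x \<noteq> y \<longrightarrow> E x y)"

definition clique_number :: "'a set \<Rightarrow> ('a \<Rightarrow> 'a \<Rightarrow> bool) \<Rightarrow> nat" where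
  "clique_number V E = Max (card ` {K. is_clique V E K})"

end

theory Submission
  imports Defs
begin

text \<open>Colour G^2 greedily, so it suffices to bound the degree of every vertex v in G^2 by
  2\<omega>^2 - 2\<omega>. Let n be the number of neighbours of v and m the number of vertices at distance 2.
  By claw-freeness, the neighbours of a neighbour u of v that are not adjacent to v form a
  clique with u, so m \<le> n(\<omega> - 1). The neighbourhood of v has no independent triple, so a
  Ramsey-type count gives 2n \<le> (\<omega> - 1)(\<omega> + 2). Finally every vertex x at distance 2 has at
  least n + 3 - 2\<omega> neighbours in the neighbourhood of v: for a common neighbour u, the
  neighbours of v not adjacent to u, resp. adjacent to u but not to x, form cliques with v,
  resp. with u and v. Double counting the edges between the two layers gives
  m(n + 3 - 2\<omega>) \<le> n(\<omega> - 1), and the three inequalities together yield n + m \<le> 2\<omega>^2 - 2\<omega>.\<close>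

definition neighbours :: "('a \<Rightarrow> 'a \<Rightarrow> bool) \<Rightarrow> 'a \<Rightarrow> 'a set" where
  "neighbours E v = {y. E v y}"

definition second_neighbours :: "('a \<Rightarrow> 'a \<Rightarrow> bool) \<Rightarrow> 'a \<Rightarrow> 'a set" where
  "second_neighbours E v = {x. x \<noteq> v \<and> \<not> E v x \<and> (\<exists>u. E v u \<and> E u x)}"

definition no_indep_triple :: "('a \<Rightarrow> 'a \<Rightarrow> bool) \<Rightarrow> 'a set \<Rightarrow> bool" where
  "no_indep_triple E S \<longleftrightarrow>
     (\<forall>a\<in>S. \<forall>b\<in>S. \<forall>c\<in>S. a \<noteq> b \<and> a \<noteq> c \<and> b \<noteq> c \<longrightarrow> E a b \<or> E a c \<or> E b c)"

lemma no_indep_triple_mono: "no_indep_triple E S \<Longrightarrow> T \<subseteq> S \<Longrightarrow> no_indep_triple E T"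
  unfolding no_indep_triple_def by blast

lemma sum_card_filter_swap:
  assumes "finite A" "finite B"
  shows "(\<Sum>a\<in>A. card {b\<in>B. R a b}) = (\<Sum>b\<in>B. card {a\<in>A. R a b})"
proof -
  have card_as_sum: "card {x\<in>X. P x} = (\<Sum>x\<in>X. if P x then 1 else 0)"
    if "finite X" for P and X :: "'c set"
    using that by (simp add: sum.If_cases Collect_conj_eq Int_commute)
  show ?thesis
    using assms by (simp add: card_as_sum) (rule sum.swap)
qed

lemma ex_less_Suc_not_in:
  assumes "finite U" "card U \<le> D"
  shows "\<exists>c<Suc D. c \<notin> U"
  using assms by (metis card_lessThan card_mono lessThan_iff not_less_eq_eq subsetI)

lemma chromatic_number_le_Suc_degree:
  assumes "finite V" and sym: "\<And>x y. R x y \<Longrightarrow> R y x" and irrefl: "\<And>x. \<not> R x x"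
    and degree: "\<And>x. x \<in> V \<Longrightarrow> card {y\<in>V. R x y} \<le> D"
  shows "chromatic_number V R \<le> Suc D"
proof -
  have "\<exists>f. proper_colouring S R (Suc D) f" if "S \<subseteq> V" for S
    using finite_subset[OF that \<open>finite V\<close>] that
  proof (induction S rule: finite_subset_induct')
    case empty
    show ?case by (simp add: proper_colouring_def)
  next
    case (insert a S)
    then obtain f where f: "proper_colouring S R (Suc D) f" by blast
    let ?U = "f ` {y\<in>S. R a y}"
    have "card ?U \<le> card {y\<in>V. R a y}"
      using insert \<open>finite V\<close> by (intro card_image_le [THEN order_trans] card_mono) auto
    with degree[OF \<open>a \<in> V\<close>] insert obtain c where "c < Suc D" "c \<notin> ?U"
      using ex_less_Suc_not_in[of ?U D] by auto
    then have "proper_colouring (insert a S) R (Suc D) (f(a := c))"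
      using f \<open>a \<notin> S\<close> irrefl sym unfolding proper_colouring_def by (auto simp: image_iff)
    then show ?case by blast
  qed
  then obtain f where "proper_colouring V R (Suc D) f" by blast
  then show ?thesis unfolding chromatic_number_def by (blast intro: Least_le)
qed

lemma arith_degree_bound:
  fixes n m w :: nat
  assumes second: "m \<le> n * (w - 1)" and counted: "m * (n + 3 - 2 * w) \<le> n * (w - 1)"
    and first: "2 * n \<le> (w - 1) * (w + 2)"
  shows "n + m \<le> 2 * w\<^sup>2 - 2 * w"
proof (cases "n \<le> 2 * w - 2")
  case True
  have "n + m \<le> n * w"
    using second first by (cases w) (simp_all add: algebra_simps)
  also have "\<dots> \<le> (2 * w - 2) * w" using True by simp
  also have "\<dots> = 2 * w\<^sup>2 - 2 * w" by (simp add: power2_eq_square algebra_simps diff_mult_distrib)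
  finally show ?thesis .
next
  case False
  then obtain k where w: "w = k + 2"
    using first by (cases w; cases "w - 1") (auto simp: numeral_eq_Suc)
  show ?thesis
  proof (cases "w - 1 \<le> n + 3 - 2 * w")
    case True
    have "m * (w - 1) \<le> n * (w - 1)"
      using True counted by (meson mult_le_mono2 order_trans)
    then have "m \<le> n" using w by (simp only: mult_le_cancel2)
    then show ?thesis using first w by (simp add: power2_eq_square algebra_simps)
  next
    case large: False
    have "2 \<le> n + 3 - 2 * w" using False w by simp
    then have "m * 2 \<le> m * (n + 3 - 2 * w)" by simp
    then have "2 * m \<le> n * (w - 1)" using counted by linarith
    then have "2 * m \<le> n * (k + 1)" using w by simp
    then have "2 * (n + m) \<le> n * (k + 3)" by (simp add: algebra_simps)
    also have "\<dots> \<le> (3 * k + 1) * (k + 3)" using large w by (intro mult_right_mono) auto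
    finally show ?thesis unfolding w by (simp add: algebra_simps power2_eq_square)
  qed
qed

locale graph =
  fixes V :: "'a set" and E :: "'a \<Rightarrow> 'a \<Rightarrow> bool"
  assumes simple: "simple_graph V E"
begin

lemma finite_V: "finite V"
  and edge_sym: "E x y \<Longrightarrow> E y x"
  and edge_irrefl: "\<not> E x x"
  and edge_in_V: "E x y \<Longrightarrow> x \<in> V" "E x y \<Longrightarrow> y \<in> V"
  using simple unfolding simple_graph_def by auto

lemma edge_sym_iff: "E x y \<longleftrightarrow> E y x"
  using edge_sym by blast

lemma finite_subset_V: "S \<subseteq> V \<Longrightarrow> finite S"
  using finite_V finite_subset by blast

lemma card_clique_le_clique_number: "is_clique V E K \<Longrightarrow> card K \<le> clique_number V E"
proof -
  have "finite {K. is_clique V E K}"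
    using finite_V
    by (rule finite_subset[rotated, OF finite_Pow_iff[THEN iffD2]]) (auto simp: is_clique_def)
  then show "is_clique V E K \<Longrightarrow> card K \<le> clique_number V E"
    unfolding clique_number_def by (intro Max_ge finite_imageI) auto
qed

lemma is_clique_insert:
  "is_clique V E K \<Longrightarrow> c \<in> V \<Longrightarrow> \<forall>a\<in>K. E c a \<Longrightarrow> is_clique V E (insert c K)"
  unfolding is_clique_def by (auto intro: edge_sym)

lemma card_clique_insert_le:
  assumes "is_clique V E K" "c \<in> V" "\<forall>a\<in>K. E c a"
  shows "card K + 1 \<le> clique_number V E"
proof -
  have "c \<notin> K" using assms(3) edge_irrefl by blast
  moreover have "finite K" using assms(1) finite_subset_V unfolding is_clique_def by blast
  ultimately show ?thesis
    using card_clique_le_clique_number[OF is_clique_insert[OF assms]] by simp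
qed

lemma no_indep_triple_non_neighbours_clique:
  assumes "no_indep_triple E S" "S \<subseteq> V" "u \<in> S"
  shows "is_clique V E {a\<in>S. a \<noteq> u \<and> \<not> E u a}"
  unfolding is_clique_def
proof (intro conjI ballI impI)
  show "{a\<in>S. a \<noteq> u \<and> \<not> E u a} \<subseteq> V" using assms(2) by blast
  fix x y
  assume "x \<in> {a\<in>S. a \<noteq> u \<and> \<not> E u a}" "y \<in> {a\<in>S. a \<noteq> u \<and> \<not> E u a}" "x \<noteq> y"
  then show "E x y"
    using assms(1)[unfolded no_indep_triple_def, rule_format, of u x y] assms(3) by blast
qed

lemma card_le_of_no_indep_triple:
  "S \<subseteq> V \<Longrightarrow> no_indep_triple E S \<Longrightarrow> (\<And>K. K \<subseteq> S \<Longrightarrow> is_clique V E K \<Longrightarrow> card K \<le> k)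
    \<Longrightarrow> 2 * card S \<le> k * (k + 3)"
proof (induction k arbitrary: S)
  case 0
  have "S = {}"
  proof (rule ccontr)
    assume "S \<noteq> {}"
    then obtain a where "{a} \<subseteq> S" by auto
    with "0.prems"(1) have "card {a} \<le> 0"
      by (intro "0.prems"(3)) (auto simp: is_clique_def)
    then show False by simp
  qed
  then show ?case by simp
next
  case (Suc k)
  show ?case
  proof (cases "S = {}")
    case False
    then obtain u where u: "u \<in> S" by auto
    define C where "C = {a\<in>S. a \<noteq> u \<and> \<not> E u a}"
    define B where "B = {a\<in>S. E u a}"
    have "finite C" "finite B"
      using Suc.prems(1) unfolding C_def B_def by (blast intro: finite_subset_V)+
    have "card C \<le> Suc k"
    proof (rule Suc.prems(3))
      show "C \<subseteq> S" unfolding C_def by blast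
      show "is_clique V E C"
        unfolding C_def by (rule no_indep_triple_non_neighbours_clique[OF Suc.prems(2,1) u])
    qed
    moreover have "2 * card B \<le> k * (k + 3)"
    proof (rule Suc.IH)
      show "B \<subseteq> V" using Suc.prems(1) unfolding B_def by blast
      show "no_indep_triple E B"
        by (rule no_indep_triple_mono[OF Suc.prems(2)]) (auto simp: B_def)
    next
      fix K assume K: "K \<subseteq> B" "is_clique V E K"
      have "is_clique V E (insert u K)"
        using K u Suc.prems(1) by (intro is_clique_insert) (auto simp: B_def)
      then have "card (insert u K) \<le> Suc k"
        using K(1) u by (intro Suc.prems(3)) (auto simp: B_def)
      moreover have "u \<notin> K" using K(1) edge_irrefl[of u] by (auto simp: B_def)
      moreover have "finite K" using K(1) \<open>finite B\<close> by (rule finite_subset)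
      ultimately show "card K \<le> k" by simp
    qed
    moreover have "card S \<le> Suc (card C + card B)"
    proof -
      have "S = insert u (C \<union> B)" using u unfolding C_def B_def by auto
      then have "card S \<le> Suc (card (C \<union> B))"
        using \<open>finite C\<close> \<open>finite B\<close> by (simp add: card_insert_if)
      then show ?thesis using card_Un_le[of C B] by linarith
    qed
    moreover have "Suc k * (Suc k + 3) = k * (k + 3) + 2 * k + 4" by (simp add: algebra_simps)
    ultimately show ?thesis by linarith
  qed simp
qed

end

locale claw_free_graph = graph +
  assumes claw_free: "claw_free V E"
begin

lemma no_claw:
  assumes "E c a" "E c b" "E c d" "a \<noteq> b" "a \<noteq> d" "b \<noteq> d"
  shows "E a b \<or> E a d \<or> E b d"
proof (rule ccontr)
  assume "\<not> ?thesis"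
  moreover have "c \<in> V" "a \<in> V" "b \<in> V" "d \<in> V" using assms edge_in_V by blast+
  ultimately have "\<exists>c\<in>V. \<exists>a\<in>V. \<exists>b\<in>V. \<exists>d\<in>V. E c a \<and> E c b \<and> E c d
      \<and> a \<noteq> b \<and> a \<noteq> d \<and> b \<noteq> d \<and> \<not> E a b \<and> \<not> E a d \<and> \<not> E b d"
    using assms by blast
  then show False using claw_free unfolding claw_free_def by blast
qed

lemma non_neighbours_clique:
  assumes "E c d" and S: "S \<subseteq> {a. E c a \<and> a \<noteq> d \<and> \<not> E d a}"
  shows "is_clique V E S"
  unfolding is_clique_def
proof (intro conjI ballI impI)
  show "S \<subseteq> V" using S edge_in_V by blast
  fix x y assume "x \<in> S" "y \<in> S" "x \<noteq> y"
  with S have "E c x" "E c y" "x \<noteq> d" "y \<noteq> d" "\<not> E d x" "\<not> E d y"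
    by blast+
  with no_claw[of c x y d] \<open>E c d\<close> \<open>x \<noteq> y\<close> show "E x y"
    using edge_sym[of x d] edge_sym[of y d] by blast
qed

lemma no_indep_triple_neighbours: "no_indep_triple E (neighbours E v)"
  unfolding no_indep_triple_def neighbours_def
proof (intro ballI impI)
  fix a b c
  assume "a \<in> {y. E v y}" "b \<in> {y. E v y}" "c \<in> {y. E v y}" "a \<noteq> b \<and> a \<noteq> c \<and> b \<noteq> c"
  then show "E a b \<or> E a c \<or> E b c" using no_claw[of v a b c] by simp
qed

lemma card_neighbours:
  assumes "v \<in> V"
  shows "2 * card (neighbours E v) \<le> (clique_number V E - 1) * (clique_number V E + 2)"
proof -
  have "2 * card (neighbours E v) \<le> (clique_number V E - 1) * (clique_number V E - 1 + 3)"
  proof (rule card_le_of_no_indep_triple[OF _ no_indep_triple_neighbours])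
    show "neighbours E v \<subseteq> V" unfolding neighbours_def using edge_in_V by blast
  next
    fix K assume "K \<subseteq> neighbours E v" "is_clique V E K"
    then have "card K + 1 \<le> clique_number V E"
      using assms by (intro card_clique_insert_le) (auto simp: neighbours_def)
    then show "card K \<le> clique_number V E - 1" by simp
  qed
  moreover have "1 \<le> clique_number V E"
    using card_clique_insert_le[of "{}" v] assms by (simp add: is_clique_def)
  ultimately show ?thesis by (cases "clique_number V E") (auto simp: algebra_simps)
qed

lemma card_neighbours_inter_second_neighbours:
  assumes "u \<in> neighbours E v"
  shows "card (neighbours E u \<inter> second_neighbours E v) + 1 \<le> clique_number V E"
proof (rule card_clique_insert_le[where c = u])
  have "E u v" using assms by (simp add: neighbours_def edge_sym_iff)
  then show "is_clique V E (neighbours E u \<inter> second_neighbours E v)"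
    by (rule non_neighbours_clique) (auto simp: neighbours_def second_neighbours_def)
qed (use assms edge_in_V in \<open>auto simp: neighbours_def\<close>)

lemma card_common_neighbours:
  assumes "x \<in> second_neighbours E v"
  shows "card (neighbours E v) + 3
    \<le> card (neighbours E v \<inter> neighbours E x) + 2 * clique_number V E"
proof -
  obtain u where vu: "E v u" and ux: "E u x" and "x \<noteq> v" "\<not> E v x"
    using assms unfolding second_neighbours_def by blast
  define C where "C = {a. E v a \<and> a \<noteq> u \<and> \<not> E u a}"
  define D where "D = {a. E u a \<and> a \<noteq> x \<and> \<not> E x a} \<inter> neighbours E v"
  have "is_clique V E C" unfolding C_def using vu by (rule non_neighbours_clique) blast
  then have C: "card C + 1 \<le> clique_number V E"
    using vu edge_in_V by (intro card_clique_insert_le) (auto simp: C_def)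
  have "is_clique V E D" unfolding D_def using ux by (rule non_neighbours_clique) blast
  then have "is_clique V E (insert v D)"
    using vu edge_in_V by (intro is_clique_insert) (auto simp: D_def neighbours_def)
  then have D: "card (insert v D) + 1 \<le> clique_number V E"
    using vu edge_in_V edge_sym[OF vu]
    by (intro card_clique_insert_le[where c = u]) (auto simp: D_def neighbours_def)
  have "v \<notin> D" using edge_irrefl by (auto simp: D_def neighbours_def)
  have "finite D" using edge_in_V by (intro finite_subset_V) (auto simp: D_def)
  have "neighbours E v \<subseteq> C \<union> D \<union> (neighbours E v \<inter> neighbours E x)"
    using ux \<open>\<not> E v x\<close> by (auto simp: C_def D_def neighbours_def edge_sym_iff)
  then have "card (neighbours E v) \<le> card (C \<union> D \<union> (neighbours E v \<inter> neighbours E x))"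
    using edge_in_V by (intro card_mono finite_subset_V) (auto simp: C_def D_def neighbours_def)
  also have "\<dots> \<le> card C + card D + card (neighbours E v \<inter> neighbours E x)"
    by (meson card_Un_le add_le_mono1 order_trans)
  finally show ?thesis using C D \<open>v \<notin> D\<close> \<open>finite D\<close> by simp
qed

lemma card_square_neighbours_le:
  assumes "v \<in> V"
  shows "card {y\<in>V. graph_square V E v y} \<le> 2 * (clique_number V E)\<^sup>2 - 2 * clique_number V E"
proof -
  let ?w = "clique_number V E"
  define N where "N = neighbours E v"
  define M where "M = second_neighbours E v"
  have fin: "finite N" "finite M"
    using edge_in_V
    by (auto intro!: finite_subset_V simp: N_def M_def neighbours_def second_neighbours_def)
  have out_degree: "card (neighbours E u \<inter> M) \<le> ?w - 1" if "u \<in> N" for u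
    using card_neighbours_inter_second_neighbours[of u v] that by (simp add: N_def M_def)
  have in_degree: "card N + 3 - 2 * ?w \<le> card (N \<inter> neighbours E x)" if "x \<in> M" for x
    using card_common_neighbours[of x v] that by (simp add: N_def M_def)
  have edges_between: "(\<Sum>u\<in>N. card (neighbours E u \<inter> M)) \<le> card N * (?w - 1)"
    using sum_bounded_above[of N _ "?w - 1"] out_degree by simp
  have "card M * (card N + 3 - 2 * ?w) \<le> (\<Sum>x\<in>M. card (N \<inter> neighbours E x))"
    using sum_bounded_below[of M "card N + 3 - 2 * ?w"] in_degree by simp
  also have "\<dots> = (\<Sum>u\<in>N. card (neighbours E u \<inter> M))"
  proof -
    have "N \<inter> neighbours E x = {u\<in>N. E u x}" "neighbours E u \<inter> M = {x\<in>M. E u x}" for x u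
      by (auto simp: neighbours_def edge_sym_iff)
    then show ?thesis using sum_card_filter_swap[OF fin(2,1)] by simp
  qed
  finally have counted: "card M * (card N + 3 - 2 * ?w) \<le> card N * (?w - 1)"
    using edges_between by linarith
  have "card M \<le> card (\<Union>u\<in>N. neighbours E u \<inter> M)"
    using fin by (intro card_mono) (auto simp: N_def M_def neighbours_def second_neighbours_def)
  also have "\<dots> \<le> (\<Sum>u\<in>N. card (neighbours E u \<inter> M))"
    using fin(1) by (rule card_UN_le)
  finally have "card M \<le> card N * (?w - 1)"
    using edges_between by linarith
  then have "card N + card M \<le> 2 * ?w\<^sup>2 - 2 * ?w"
    using arith_degree_bound counted card_neighbours[OF assms] by (simp add: N_def)
  moreover have "card {y\<in>V. graph_square V E v y} \<le> card (N \<union> M)"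
    using fin by (intro card_mono)
      (auto simp: graph_square_def N_def M_def neighbours_def second_neighbours_def)
  ultimately show ?thesis
    using card_Un_le[of N M] by linarith
qed

end

theorem mainTheorem7:
  fixes V :: "'a set" and E :: "'a \<Rightarrow> 'a \<Rightarrow> bool"
  assumes "simple_graph V E" and "claw_free V E"
  shows "chromatic_number V (graph_square V E)
           \<le> 2 * (clique_number V E)^2 - 2 * clique_number V E + 1"
proof -
  interpret claw_free_graph V E by unfold_locales (fact assms)+
  have "chromatic_number V (graph_square V E)
          \<le> Suc (2 * (clique_number V E)\<^sup>2 - 2 * clique_number V E)"
  proof (rule chromatic_number_le_Suc_degree[OF finite_V])
    show "graph_square V E y x" if "graph_square V E x y" for x y
      using that edge_sym unfolding graph_square_def by blast
    show "\<not> graph_square V E x x" for x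
      unfolding graph_square_def by blast
  qed (fact card_square_neighbours_le)
  then show ?thesis by simp
qed

end
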